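(* Let $M\in U_q^+$ be a $q$-commutator monomial $M\in\bigcup_kP_k$, given as an iterated $q$-bracket expression in the generators $E_i$. Then $\pi_B^+(M)=0$ if and only if, in this expression, some application of the $q$-bracket $[X,Y]_q$ has arguments $X,Y$ of weights $\alpha,\beta$ with $\langle\alpha,\beta\rangle_B=0$. If no such application occurs, $\pi_B^+(M)\in\mathcal{P}_B^+$ is a nonzero monomial (nonzero scalar multiple of a monomial in the $e_i$).
   Context: $\mathfrak{g}$ is an untwisted affine Lie algebra with Cartan matrix $A=(a_{ij})$ (indices $i=0,\dots,\ell$); $d_i$ coprime positive integers with $c_{ij}=d_ia_{ij}=d_ja_{ji}$, invariant form normalized by $(\alpha_i,\alpha_j)=c_{ij}$. Choose $\sigma_{ij}\in\{\pm1\}$ for $i<j$ with $a_{ij}\ne0$ and put $b_{ij}=\sigma_{ij}c_{ij}$ ($i<j$), $b_{ii}=0$, $b_{ij}=-\sigma_{ji}c_{ij}$ ($i>j$). Let $\{\cdot,\cdot\}_B$ be the skew-symmetric bilinear form on the root lattice with $\{\alpha_i,\alpha_j\}_B=b_{ij}$, and $\langle\alpha,\beta\rangle_B:=(\alpha,\beta)-\{\alpha,\beta\}_B$. $\mathcal{P}_B^+$ is the $\mathbb{Q}(q)$-algebra generated by $e_i$ with $e_ie_j=q^{b_{ij}}e_je_i$, and $\pi_B^+:U_q^+\to\mathcal{P}_B^+$ is the weight-graded algebra surjection with $E_i\mapsto e_i$, where $U_q^+$ is the positive part of the quantum enveloping algebra $U_q(\mathfrak{g})$ (generated by $E_i$,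 weight of $E_i$ is $\alpha_i$). The $q$-bracket is $[x,y]_q=xy-q^{(\mu,\nu)}yx$ for $x,y$ of weights $\mu,\nu$. $P_0=\{E_i\}$, $P_{k+1}=\bigcup_{a,b\le k}\{[x,y]_q:x\in P_a,y\in P_b\}$. *)

theory Defs
  imports "HOL-Computational_Algebra.Polynomial" "HOL-Computational_Algebra.Fraction_Field"
begin

type_synonym qfield = "rat poly fract"

definition qv :: qfield where "qv = Fract [:0, 1:] 1"

definition gcm :: "nat \<Rightarrow> (nat \<Rightarrow> nat \<Rightarrow> int) \<Rightarrow> bool" where
  "gcm l A \<longleftrightarrow> (\<forall>i\<le>l. A i i = 2) \<and> (\<forall>i\<le>l. \<forall>j\<le>l. i \<noteq> j \<longrightarrow> A i j \<le> 0)
     \<and> (\<forall>i\<le>l. \<forall>j\<le>l. A i j = 0 \<longleftrightarrow> A j i = 0)"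

definition indecomposable :: "nat \<Rightarrow> (nat \<Rightarrow> nat \<Rightarrow> int) \<Rightarrow> bool" where
  "indecomposable l A \<longleftrightarrow>
     \<not> (\<exists>S. S \<noteq> {} \<and> S \<subset> {..l} \<and> (\<forall>i\<in>S. \<forall>j\<in>{..l} - S. A i j = 0))"

text \<open>For an indecomposable GCM, affine type is equivalent to the
  existence of a positive vector in the kernel (Kac, Cor. 4.3). Among affine matrices the
  untwisted ones are those having a node k with Kac label a_k = 1, dual label a_k^v = 1,
  and a_j^v \<le> a_j for all j (i.e. alpha_k is a longest simple root, (alpha_j,alpha_j) being
  proportional to a_j^v / a_j).\<close>

definition untwisted_affine_cartan :: "nat \<Rightarrow> (nat \<Rightarrow> nat \<Rightarrow> int) \<Rightarrow> bool" where
  "untwisted_affine_cartan l A \<longleftrightarrow> gcm l A \<and> indecomposable l A \<and>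
     (\<exists>k\<le>l. \<exists>a av :: nat \<Rightarrow> int.
        (\<forall>i\<le>l. a i > 0 \<and> av i > 0) \<and>
        (\<forall>i\<le>l. (\<Sum>j\<le>l. A i j * a j) = 0) \<and>
        (\<forall>j\<le>l. (\<Sum>i\<le>l. av i * A i j) = 0) \<and>
        a k = 1 \<and> av k = 1 \<and> (\<forall>j\<le>l. av j \<le> a j))"

definition symmetrizer :: "nat \<Rightarrow> (nat \<Rightarrow> nat \<Rightarrow> int) \<Rightarrow> (nat \<Rightarrow> int) \<Rightarrow> bool" where
  "symmetrizer l A d \<longleftrightarrow> (\<forall>i\<le>l. d i > 0) \<and> Gcd (d ` {..l}) = 1 \<and>
     (\<forall>i\<le>l. \<forall>j\<le>l. d i * A i j = d j * A j i)"

definition cmat :: "(nat \<Rightarrow> nat \<Rightarrow> int) \<Rightarrow> (nat \<Rightarrow> int) \<Rightarrow> nat \<Rightarrow> nat \<Rightarrow> int" where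
  "cmat A d i j = d i * A i j"

definition sign_choice :: "nat \<Rightarrow> (nat \<Rightarrow> nat \<Rightarrow> int) \<Rightarrow> (nat \<Rightarrow> nat \<Rightarrow> int) \<Rightarrow> bool" where
  "sign_choice l A \<sigma> \<longleftrightarrow> (\<forall>i\<le>l. \<forall>j\<le>l. i < j \<and> A i j \<noteq> 0 \<longrightarrow> \<sigma> i j \<in> {1, -1})"

definition bmat :: "(nat \<Rightarrow> nat \<Rightarrow> int) \<Rightarrow> (nat \<Rightarrow> int) \<Rightarrow> (nat \<Rightarrow> nat \<Rightarrow> int) \<Rightarrow> nat \<Rightarrow> nat \<Rightarrow> int" where
  "bmat A d \<sigma> i j = (if i < j then \<sigma> i j * cmat A d i j
                      else if i = j then 0 else - \<sigma> j i * cmat A d i j)"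

section \<open>Forms on the root lattice (elements = coefficient vectors w.r.t. alpha_0..alpha_l)\<close>

definition sform :: "nat \<Rightarrow> (nat \<Rightarrow> nat \<Rightarrow> int) \<Rightarrow> (nat \<Rightarrow> int) \<Rightarrow> (nat \<Rightarrow> int) \<Rightarrow> (nat \<Rightarrow> int) \<Rightarrow> int" where
  "sform l A d x y = (\<Sum>i\<le>l. \<Sum>j\<le>l. x i * y j * cmat A d i j)"

definition bform :: "nat \<Rightarrow> (nat \<Rightarrow> nat \<Rightarrow> int) \<Rightarrow> (nat \<Rightarrow> int) \<Rightarrow> (nat \<Rightarrow> nat \<Rightarrow> int)
    \<Rightarrow> (nat \<Rightarrow> int) \<Rightarrow> (nat \<Rightarrow> int) \<Rightarrow> int" where
  "bform l A d \<sigma> x y = (\<Sum>i\<le>l. \<Sum>j\<le>l. x i * y j * bmat A d \<sigma> i j)"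

definition angle_form :: "nat \<Rightarrow> (nat \<Rightarrow> nat \<Rightarrow> int) \<Rightarrow> (nat \<Rightarrow> int) \<Rightarrow> (nat \<Rightarrow> nat \<Rightarrow> int)
    \<Rightarrow> (nat \<Rightarrow> int) \<Rightarrow> (nat \<Rightarrow> int) \<Rightarrow> int" where
  "angle_form l A d \<sigma> x y = sform l A d x y - bform l A d \<sigma> x y"

section \<open>q-commutator monomials (iterated q-bracket expressions in the E_i)\<close>

datatype qexpr = Gen nat | Br qexpr qexpr

text \<open>M belongs to the union of the P_k (all generators among E_0..E_l).\<close>
fun qexpr_over :: "nat \<Rightarrow> qexpr \<Rightarrow> bool" where
  "qexpr_over l (Gen i) = (i \<le> l)"
| "qexpr_over l (Br x y) = (qexpr_over l x \<and> qexpr_over l y)"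

fun wt :: "qexpr \<Rightarrow> nat \<Rightarrow> int" where
  "wt (Gen i) = (\<lambda>j. if j = i then 1 else 0)"
| "wt (Br x y) = (\<lambda>j. wt x j + wt y j)"

fun degenerate_bracket :: "nat \<Rightarrow> (nat \<Rightarrow> nat \<Rightarrow> int) \<Rightarrow> (nat \<Rightarrow> int) \<Rightarrow> (nat \<Rightarrow> nat \<Rightarrow> int)
    \<Rightarrow> qexpr \<Rightarrow> bool" where
  "degenerate_bracket l A d \<sigma> (Gen i) = False"
| "degenerate_bracket l A d \<sigma> (Br x y) =
     (angle_form l A d \<sigma> (wt x) (wt y) = 0
      \<or> degenerate_bracket l A d \<sigma> x \<or> degenerate_bracket l A d \<sigma> y)"

section \<open>Free algebra on E_i (words) -- U_q^+ is its quotient by the quantum Serre relations\<close>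

type_synonym freealg = "nat list \<Rightarrow> qfield"

definition fgen :: "nat \<Rightarrow> freealg" where
  "fgen i = (\<lambda>w. if w = [i] then 1 else 0)"

definition fmul :: "freealg \<Rightarrow> freealg \<Rightarrow> freealg" where
  "fmul f g = (\<lambda>w. \<Sum>k\<le>length w. f (take k w) * g (drop k w))"

fun feval :: "nat \<Rightarrow> (nat \<Rightarrow> nat \<Rightarrow> int) \<Rightarrow> (nat \<Rightarrow> int) \<Rightarrow> qexpr \<Rightarrow> freealg" where
  "feval l A d (Gen i) = fgen i"
| "feval l A d (Br x y) =
     (\<lambda>w. fmul (feval l A d x) (feval l A d y) w
          - qv powi (sform l A d (wt x) (wt y)) * fmul (feval l A d y) (feval l A d x) w)"

section \<open>The quantum affine space P_B^+: basis of ordered monomials e_0^{a_0}...e_l^{a_l}\<close>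

type_synonym palg = "(nat \<Rightarrow> nat) \<Rightarrow> qfield"

text \<open>e^a e^b = q^(twist a b) e^(a+b).\<close>
definition twist :: "nat \<Rightarrow> (nat \<Rightarrow> nat \<Rightarrow> int) \<Rightarrow> (nat \<Rightarrow> int) \<Rightarrow> (nat \<Rightarrow> nat \<Rightarrow> int)
    \<Rightarrow> (nat \<Rightarrow> nat) \<Rightarrow> (nat \<Rightarrow> nat) \<Rightarrow> int" where
  "twist l A d \<sigma> a b = (\<Sum>i\<le>l. \<Sum>j<i. int (a i) * int (b j) * bmat A d \<sigma> i j)"

definition pmul :: "nat \<Rightarrow> (nat \<Rightarrow> nat \<Rightarrow> int) \<Rightarrow> (nat \<Rightarrow> int) \<Rightarrow> (nat \<Rightarrow> nat \<Rightarrow> int)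
    \<Rightarrow> palg \<Rightarrow> palg \<Rightarrow> palg" where
  "pmul l A d \<sigma> f g = (\<lambda>c. \<Sum>a\<in>{a. \<forall>i. a i \<le> c i}.
       qv powi (twist l A d \<sigma> a (\<lambda>i. c i - a i)) * f a * g (\<lambda>i. c i - a i))"

definition pone :: palg where "pone = (\<lambda>c. if c = (\<lambda>_. 0) then 1 else 0)"

definition pgen :: "nat \<Rightarrow> palg" where
  "pgen i = (\<lambda>c. if c = (\<lambda>j. if j = i then 1 else 0) then 1 else 0)"

definition pmono :: "nat \<Rightarrow> (nat \<Rightarrow> nat \<Rightarrow> int) \<Rightarrow> (nat \<Rightarrow> int) \<Rightarrow> (nat \<Rightarrow> nat \<Rightarrow> int)
    \<Rightarrow> nat list \<Rightarrow> palg" where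
  "pmono l A d \<sigma> w = foldr (\<lambda>i p. pmul l A d \<sigma> (pgen i) p) w pone"

text \<open>The algebra map E_i \<mapsto> e_i from the free algebra (through which pi_B^+ factors).\<close>
definition pi_free :: "nat \<Rightarrow> (nat \<Rightarrow> nat \<Rightarrow> int) \<Rightarrow> (nat \<Rightarrow> int) \<Rightarrow> (nat \<Rightarrow> nat \<Rightarrow> int)
    \<Rightarrow> freealg \<Rightarrow> palg" where
  "pi_free l A d \<sigma> f = (\<lambda>c. \<Sum>w\<in>{w. f w \<noteq> 0}. f w * pmono l A d \<sigma> w c)"

definition piB :: "nat \<Rightarrow> (nat \<Rightarrow> nat \<Rightarrow> int) \<Rightarrow> (nat \<Rightarrow> int) \<Rightarrow> (nat \<Rightarrow> nat \<Rightarrow> int)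
    \<Rightarrow> qexpr \<Rightarrow> palg" where
  "piB l A d \<sigma> M = pi_free l A d \<sigma> (feval l A d M)"

end

theory Submission
  imports Defs
begin

(* Under E_i \<mapsto> e_i a word w goes to q^t(w) e^deg(w), where deg w is its multidegree and
   t(uv) = t(u) + t(v) + tw(deg u, deg v) for the twist exponent tw of P_B^+.  A q-bracket
   expression evaluates in the free algebra to an element homogeneous of its weight, so its
   image is S(M) times a single basis monomial, and the scalar factors over a bracket as
   S([X,Y]) = S(X) S(Y) (q^tw(\<alpha>,\<beta>) - q^((\<alpha>,\<beta>) + tw(\<beta>,\<alpha>))).  Since tw(\<alpha>,\<beta>) - tw(\<beta>,\<alpha>) = {\<alpha>,\<beta>}_B
   and q is not a root of unity, the last factor vanishes exactly when <\<alpha>,\<beta>>_B = 0. *)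

lemma qv_nonzero: "qv \<noteq> 0"
  by (simp add: qv_def Zero_fract_def eq_fract)

lemma qv_powi_add: "qv powi (m + n) = qv powi m * qv powi n"
  by (simp add: power_int_add qv_nonzero)

lemma qv_powi_nonzero: "qv powi n \<noteq> 0"
  by (simp add: power_int_eq_0_iff qv_nonzero)

lemma qv_powi_neg_cancel: "qv powi - n * (qv powi n * x) = x"
  using qv_powi_add[of "- n" n] by (simp add: mult.assoc[symmetric])

lemma qv_power: "qv ^ n = Fract (monom 1 n) 1"
  by (induction n) (simp_all add: One_fract_def qv_def monom_Suc mult.commute)

lemma qv_power_eq_1_iff: "qv ^ n = 1 \<longleftrightarrow> n = 0"
proof
  assume "qv ^ n = 1"
  then have "monom (1::rat) n = 1"
    by (simp add: qv_power One_fract_def eq_fract)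
  then show "n = 0"
    by (metis degree_1 degree_monom_eq one_neq_zero)
qed simp

lemma qv_powi_inject: "qv powi m = qv powi n \<longleftrightarrow> m = n"
proof
  have no_gap: False if "qv powi m = qv powi n" "m < n" for m n :: int
  proof -
    have "qv powi n = qv powi m * qv powi (n - m)"
      using qv_powi_add[of m "n - m"] by simp
    with that(1) have "qv powi (n - m) = 1"
      by (simp add: power_int_eq_0_iff qv_nonzero)
    with that(2) have "qv ^ nat (n - m) = 1"
      by (simp add: power_int_def)
    with that(2) show False
      by (simp add: qv_power_eq_1_iff)
  qed
  assume "qv powi m = qv powi n"
  then show "m = n"
    using no_gap[of m n] no_gap[of n m] by fastforce
qed simp

lemma finite_pointwise_below:
  assumes "finite {i. c i \<noteq> (0::nat)}"
  shows "finite {a. \<forall>i. a i \<le> c i}"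
proof (rule finite_subset)
  let ?S = "{i. c i \<noteq> 0}"
  let ?m = "Max (c ` ?S)"
  show "{a. \<forall>i. a i \<le> c i} \<subseteq> {a. \<forall>i. (i \<in> ?S \<longrightarrow> a i \<in> {..?m}) \<and> (i \<notin> ?S \<longrightarrow> a i = 0)}"
  proof (intro subsetI CollectI allI conjI impI)
    fix a i
    assume "a \<in> {a. \<forall>i. a i \<le> c i}"
    then have "a i \<le> c i"
      by simp
    moreover have "i \<in> ?S \<Longrightarrow> c i \<le> ?m"
      using assms by simp
    ultimately show "i \<in> ?S \<Longrightarrow> a i \<in> {..?m}" and "i \<notin> ?S \<Longrightarrow> a i = 0"
      by auto
  qed
  show "finite {a. \<forall>i. (i \<in> ?S \<longrightarrow> a i \<in> {..?m}) \<and> (i \<notin> ?S \<longrightarrow> a i = 0)}"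
    using assms by (intro finite_set_of_finite_funs) auto
qed

lemma finite_count_list_support: "finite {i. count_list w i \<noteq> 0}"
  by (rule finite_subset[of _ "set w"]) (auto simp: count_list_0_iff)

lemma count_list_append_eq: "count_list (u @ v) = (\<lambda>i. count_list u i + count_list v i)"
  by auto

lemma sum_lower_triangle_antisym:
  fixes B :: "nat \<Rightarrow> nat \<Rightarrow> 'a::comm_ring"
  assumes "\<And>i j. i \<le> n \<Longrightarrow> j \<le> n \<Longrightarrow> B j i = - B i j"
    and "\<And>i. i \<le> n \<Longrightarrow> B i i = 0"
  shows "(\<Sum>i\<le>n. \<Sum>j<i. x i * y j * B i j) - (\<Sum>i\<le>n. \<Sum>j<i. y i * x j * B i j)
       = (\<Sum>i\<le>n. \<Sum>j\<le>n. x i * y j * B i j)"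
  using assms
proof (induction n)
  case (Suc n)
  have IH: "(\<Sum>i\<le>n. \<Sum>j<i. x i * y j * B i j) - (\<Sum>i\<le>n. \<Sum>j<i. y i * x j * B i j)
      = (\<Sum>i\<le>n. \<Sum>j\<le>n. x i * y j * B i j)"
    by (rule Suc.IH) (auto intro: Suc.prems)
  have antisym_last: "B j (Suc n) = - B (Suc n) j" if "j \<le> n" for j
    using Suc.prems(1)[of "Suc n" j] that by simp
  have "(\<Sum>i\<le>Suc n. \<Sum>j\<le>Suc n. x i * y j * B i j)
      = (\<Sum>i\<le>n. \<Sum>j\<le>n. x i * y j * B i j) + (\<Sum>i\<le>n. x i * y (Suc n) * B i (Suc n))
        + (\<Sum>j\<le>n. x (Suc n) * y j * B (Suc n) j)"
    by (simp add: sum.distrib Suc.prems(2))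
  also have "(\<Sum>i\<le>n. x i * y (Suc n) * B i (Suc n)) = - (\<Sum>j\<le>n. y (Suc n) * x j * B (Suc n) j)"
    by (simp add: antisym_last sum_negf[symmetric] algebra_simps)
  finally show ?case
    using IH by (simp add: lessThan_Suc_atMost algebra_simps)
qed simp

definition pbasis :: "(nat \<Rightarrow> nat) \<Rightarrow> palg" where
  "pbasis a = (\<lambda>c. if c = a then 1 else 0)"

definition homogeneous :: "freealg \<Rightarrow> (nat \<Rightarrow> nat) \<Rightarrow> bool" where
  "homogeneous f a \<longleftrightarrow> (\<forall>w. f w \<noteq> 0 \<longrightarrow> count_list w = a)"

fun qexpr_word :: "qexpr \<Rightarrow> nat list" where
  "qexpr_word (Gen i) = [i]"
| "qexpr_word (Br x y) = qexpr_word x @ qexpr_word y"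

lemma wt_eq_count_list: "wt M = (\<lambda>j. int (count_list (qexpr_word M) j))"
  by (induction M) auto

lemma set_qexpr_word: "qexpr_over l M \<Longrightarrow> set (qexpr_word M) \<subseteq> {..l}"
  by (induction M) auto

lemma fmul_nonzero_imp_append:
  assumes "fmul f g w \<noteq> 0"
  obtains u v where "w = u @ v" "f u \<noteq> 0" "g v \<noteq> 0"
proof -
  from assms obtain k where "f (take k w) * g (drop k w) \<noteq> 0"
    unfolding fmul_def by (meson sum.not_neutral_contains_not_neutral)
  then show ?thesis
    using that[of "take k w" "drop k w"] by simp
qed

lemma support_fmul_subset:
  "{w. fmul f g w \<noteq> 0} \<subseteq> (\<lambda>(u, v). u @ v) ` ({u. f u \<noteq> 0} \<times> {v. g v \<noteq> 0})"
  by (force elim: fmul_nonzero_imp_append)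

lemma finite_support_fmul:
  "finite {u. f u \<noteq> 0} \<Longrightarrow> finite {v. g v \<noteq> 0} \<Longrightarrow> finite {w. fmul f g w \<noteq> 0}"
  using finite_subset[OF support_fmul_subset] by blast

lemma homogeneous_fmul:
  "homogeneous f a \<Longrightarrow> homogeneous g b \<Longrightarrow> homogeneous (fmul f g) (\<lambda>i. a i + b i)"
  unfolding homogeneous_def by (fastforce elim: fmul_nonzero_imp_append)

lemma homogeneous_diff_scaled:
  "homogeneous f a \<Longrightarrow> homogeneous g a \<Longrightarrow> homogeneous (\<lambda>w. f w - c * g w) a"
  unfolding homogeneous_def by (metis diff_zero mult_zero_right)

lemma fmul_eq_sum_factorizations:
  "fmul f g w = (\<Sum>(u, v) \<in> {(u, v). f u \<noteq> 0 \<and> g v \<noteq> 0 \<and> u @ v = w}. f u * g v)"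
proof -
  let ?split = "\<lambda>k. (take k w, drop k w)"
  let ?K = "?split ` {..length w}"
  have "inj_on ?split {..length w}"
    by (rule inj_onI) (metis atMost_iff length_take min.absorb2 prod.inject)
  then have "fmul f g w = (\<Sum>(u, v)\<in>?K. f u * g v)"
    unfolding fmul_def by (simp add: sum.reindex)
  also have "\<dots> = (\<Sum>(u, v)\<in>?K \<inter> {(u, v). f u \<noteq> 0 \<and> g v \<noteq> 0}. f u * g v)"
    by (intro sum.mono_neutral_right) auto
  also have "?K \<inter> {(u, v). f u \<noteq> 0 \<and> g v \<noteq> 0} = {(u, v). f u \<noteq> 0 \<and> g v \<noteq> 0 \<and> u @ v = w}"
  proof (intro equalityI subsetI)
    fix p
    assume "p \<in> {(u, v). f u \<noteq> 0 \<and> g v \<noteq> 0 \<and> u @ v = w}"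
    then obtain u v where "p = (u, v)" "f u \<noteq> 0" "g v \<noteq> 0" "w = u @ v"
      by auto
    then show "p \<in> ?K \<inter> {(u, v). f u \<noteq> 0 \<and> g v \<noteq> 0}"
      by (auto simp: image_iff intro!: bexI[of _ "length u"])
  qed auto
  finally show ?thesis .
qed

context
  fixes l :: nat and A :: "nat \<Rightarrow> nat \<Rightarrow> int" and d :: "nat \<Rightarrow> int"
    and \<sigma> :: "nat \<Rightarrow> nat \<Rightarrow> int"
begin

lemma twist_add_left:
  "twist l A d \<sigma> (\<lambda>i. a i + b i) c = twist l A d \<sigma> a c + twist l A d \<sigma> b c"
  unfolding twist_def by (simp add: algebra_simps sum.distrib)

lemma twist_add_right:
  "twist l A d \<sigma> a (\<lambda>i. b i + c i) = twist l A d \<sigma> a b + twist l A d \<sigma> a c"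
  unfolding twist_def by (simp add: algebra_simps sum.distrib)

lemma twist_antisym:
  assumes "\<And>i j. i \<le> l \<Longrightarrow> j \<le> l \<Longrightarrow> cmat A d i j = cmat A d j i"
  shows "twist l A d \<sigma> a b - twist l A d \<sigma> b a = bform l A d \<sigma> (\<lambda>i. int (a i)) (\<lambda>i. int (b i))"
proof -
  have bmat_antisym: "bmat A d \<sigma> j i = - bmat A d \<sigma> i j" if "i \<le> l" "j \<le> l" for i j
    using assms[OF that] by (auto simp: bmat_def)
  show ?thesis
    unfolding twist_def bform_def
    by (rule sum_lower_triangle_antisym[OF bmat_antisym]) (simp_all add: bmat_def)
qed

fun word_twist :: "nat list \<Rightarrow> int" where
  "word_twist [] = 0"
| "word_twist (i # w) = twist l A d \<sigma> (count_list [i]) (count_list w) + word_twist w"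

lemma word_twist_append:
  "word_twist (u @ v) = word_twist u + word_twist v + twist l A d \<sigma> (count_list u) (count_list v)"
proof (induction u)
  case Nil
  then show ?case by (simp add: twist_def)
next
  case (Cons i u)
  have "count_list (i # u) = (\<lambda>j. count_list [i] j + count_list u j)"
    by auto
  then show ?case
    by (simp add: Cons twist_add_left twist_add_right count_list_append_eq del: count_list.simps)
qed

lemma pmul_pbasis:
  assumes "finite {i. a i \<noteq> 0}" and "finite {i. b i \<noteq> 0}"
  shows "pmul l A d \<sigma> (\<lambda>c. x * pbasis a c) (\<lambda>c. y * pbasis b c)
       = (\<lambda>c. x * y * qv powi twist l A d \<sigma> a b * pbasis (\<lambda>i. a i + b i) c)"
proof
  fix c
  have summand: "qv powi twist l A d \<sigma> a' (\<lambda>i. c i - a' i) * (x * pbasis a a') * (y * pbasis b (\<lambda>i. c i - a' i))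
      = (if c = (\<lambda>i. a i + b i) \<and> a' = a then x * y * qv powi twist l A d \<sigma> a b else 0)"
    if "\<forall>i. a' i \<le> c i" for a'
  proof (cases "a' = a")
    case True
    with that have "(\<lambda>i. c i - a' i) = b \<longleftrightarrow> c = (\<lambda>i. a i + b i)"
      unfolding fun_eq_iff by (metis add_diff_cancel_left' le_add_diff_inverse)
    with True show ?thesis
      by (auto simp: pbasis_def)
  qed (simp add: pbasis_def)
  have pmul_eq: "pmul l A d \<sigma> (\<lambda>c. x * pbasis a c) (\<lambda>c. y * pbasis b c) c
      = (\<Sum>a'\<in>{a'. \<forall>i. a' i \<le> c i}. if c = (\<lambda>i. a i + b i) \<and> a' = a
                                        then x * y * qv powi twist l A d \<sigma> a b else 0)"
    unfolding pmul_def by (intro sum.cong refl) (simp add: summand)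
  show "pmul l A d \<sigma> (\<lambda>c. x * pbasis a c) (\<lambda>c. y * pbasis b c) c
       = x * y * qv powi twist l A d \<sigma> a b * pbasis (\<lambda>i. a i + b i) c"
  proof (cases "c = (\<lambda>i. a i + b i)")
    case True
    have "finite {i. c i \<noteq> 0}"
      by (rule finite_subset[of _ "{i. a i \<noteq> 0} \<union> {i. b i \<noteq> 0}"]) (use True assms in auto)
    moreover have "a \<in> {a'. \<forall>i. a' i \<le> c i}"
      using True by simp
    ultimately show ?thesis
      unfolding pmul_eq using True by (simp add: sum.delta finite_pointwise_below pbasis_def)
  qed (unfold pmul_eq, simp add: pbasis_def)
qed

lemma pmono_eq_pbasis: "pmono l A d \<sigma> w = (\<lambda>c. qv powi word_twist w * pbasis (count_list w) c)"
proof (induction w)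
  case Nil
  then show ?case by (auto simp: pmono_def pone_def pbasis_def fun_eq_iff)
next
  case (Cons i w)
  have "count_list [i] = (\<lambda>j. if j = i then 1 else 0)"
    by auto
  then have pgen_eq: "pgen i = (\<lambda>c. 1 * pbasis (count_list [i]) c)"
    by (simp add: pgen_def pbasis_def)
  have count_Cons: "count_list (i # w) = (\<lambda>j. count_list [i] j + count_list w j)"
    by auto
  have "pmono l A d \<sigma> (i # w) = pmul l A d \<sigma> (pgen i) (pmono l A d \<sigma> w)"
    by (simp add: pmono_def)
  also have "\<dots> = (\<lambda>c. 1 * qv powi word_twist w * qv powi twist l A d \<sigma> (count_list [i]) (count_list w)
                      * pbasis (\<lambda>j. count_list [i] j + count_list w j) c)"
    unfolding pgen_eq Cons by (rule pmul_pbasis[OF finite_count_list_support finite_count_list_support])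
  also have "\<dots> = (\<lambda>c. qv powi word_twist (i # w) * pbasis (count_list (i # w)) c)"
    by (simp only: count_Cons word_twist.simps qv_powi_add ac_simps mult_1)
  finally show ?case .
qed

definition pi_scalar :: "freealg \<Rightarrow> qfield" where
  "pi_scalar f = (\<Sum>w | f w \<noteq> 0. f w * qv powi word_twist w)"

lemma pi_scalar_superset:
  assumes "finite W" and "{w. f w \<noteq> 0} \<subseteq> W"
  shows "pi_scalar f = (\<Sum>w\<in>W. f w * qv powi word_twist w)"
  unfolding pi_scalar_def using assms by (intro sum.mono_neutral_left) auto

lemma pi_free_homogeneous:
  assumes "homogeneous f a"
  shows "pi_free l A d \<sigma> f = (\<lambda>c. pi_scalar f * pbasis a c)"
  using assms
  by (auto simp: pi_free_def pi_scalar_def pmono_eq_pbasis homogeneous_def sum_distrib_right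
      intro!: sum.cong)

lemma pi_scalar_diff_scaled:
  assumes "finite {w. f w \<noteq> 0}" and "finite {w. g w \<noteq> 0}"
  shows "pi_scalar (\<lambda>w. f w - c * g w) = pi_scalar f - c * pi_scalar g"
proof -
  let ?W = "{w. f w \<noteq> 0} \<union> {w. g w \<noteq> 0}"
  have "pi_scalar (\<lambda>w. f w - c * g w) = (\<Sum>w\<in>?W. (f w - c * g w) * qv powi word_twist w)"
    using assms by (intro pi_scalar_superset) auto
  also have "\<dots> = pi_scalar f - c * pi_scalar g"
    using assms
    by (simp add: pi_scalar_superset[of ?W f] pi_scalar_superset[of ?W g] algebra_simps
        sum_subtractf sum_distrib_left)
  finally show ?thesis .
qed

lemma pi_scalar_fmul:
  assumes fin: "finite {u. f u \<noteq> 0}" "finite {v. g v \<noteq> 0}"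
    and hom: "homogeneous f a" "homogeneous g b"
  shows "pi_scalar (fmul f g) = pi_scalar f * pi_scalar g * qv powi twist l A d \<sigma> a b"
proof -
  let ?P = "{u. f u \<noteq> 0} \<times> {v. g v \<noteq> 0}"
  let ?W = "(\<lambda>(u, v). u @ v) ` ?P"
  let ?h = "\<lambda>(u, v). f u * g v * qv powi word_twist (u @ v)"
  have "pi_scalar (fmul f g) = (\<Sum>w\<in>?W. fmul f g w * qv powi word_twist w)"
    using fin by (intro pi_scalar_superset support_fmul_subset) auto
  also have "\<dots> = (\<Sum>w\<in>?W. \<Sum>p\<in>{p\<in>?P. (\<lambda>(u, v). u @ v) p = w}. ?h p)"
    by (intro sum.cong refl)
      (auto simp: fmul_eq_sum_factorizations sum_distrib_right case_prod_unfold
        intro!: sum.cong)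
  also have "\<dots> = (\<Sum>p\<in>?P. ?h p)"
    using fin by (intro sum.group) auto
  also have "\<dots> = (\<Sum>(u, v)\<in>?P. (f u * qv powi word_twist u) * (g v * qv powi word_twist v)
                    * qv powi twist l A d \<sigma> a b)"
    using hom
    by (intro sum.cong refl)
      (auto simp: homogeneous_def word_twist_append qv_powi_add)
  also have "\<dots> = (\<Sum>(u, v)\<in>?P. (f u * qv powi word_twist u) * (g v * qv powi word_twist v))
                    * qv powi twist l A d \<sigma> a b"
    by (simp add: sum_distrib_right case_prod_unfold)
  also have "\<dots> = pi_scalar f * pi_scalar g * qv powi twist l A d \<sigma> a b"
    unfolding pi_scalar_def sum_product sum.cartesian_product by simp
  finally show ?thesis .
qed

lemma finite_support_feval: "finite {w. feval l A d M w \<noteq> 0}"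
proof (induction M)
  case (Gen i)
  have "{w. fgen i w \<noteq> 0} = {[i]}"
    by (auto simp: fgen_def)
  then show ?case by simp
next
  case (Br x y)
  have "{w. feval l A d (Br x y) w \<noteq> 0}
      \<subseteq> {w. fmul (feval l A d x) (feval l A d y) w \<noteq> 0} \<union> {w. fmul (feval l A d y) (feval l A d x) w \<noteq> 0}"
    by auto
  then show ?case
    using Br by (auto intro: finite_subset finite_support_fmul)
qed

lemma homogeneous_feval: "homogeneous (feval l A d M) (count_list (qexpr_word M))"
proof (induction M)
  case (Gen i)
  then show ?case by (simp add: homogeneous_def fgen_def fun_eq_iff)
next
  case (Br x y)
  have "homogeneous (fmul (feval l A d x) (feval l A d y)) (count_list (qexpr_word (Br x y)))"
    and "homogeneous (fmul (feval l A d y) (feval l A d x)) (count_list (qexpr_word (Br x y)))"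
    using homogeneous_fmul[OF Br(1,2)] homogeneous_fmul[OF Br(2,1)]
    by (simp_all add: count_list_append_eq add.commute)
  then show ?case
    unfolding feval.simps by (rule homogeneous_diff_scaled)
qed

lemma pi_scalar_feval_Br:
  fixes x y :: qexpr
  defines "a \<equiv> count_list (qexpr_word x)" and "b \<equiv> count_list (qexpr_word y)"
  shows "pi_scalar (feval l A d (Br x y))
    = pi_scalar (feval l A d x) * pi_scalar (feval l A d y)
      * (qv powi twist l A d \<sigma> a b - qv powi (sform l A d (wt x) (wt y) + twist l A d \<sigma> b a))"
  unfolding a_def b_def
  by (simp add: pi_scalar_diff_scaled finite_support_fmul finite_support_feval
      pi_scalar_fmul[OF _ _ homogeneous_feval homogeneous_feval] qv_powi_add algebra_simps)

lemma pi_scalar_feval_eq_0_iff: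
  assumes "\<And>i j. i \<le> l \<Longrightarrow> j \<le> l \<Longrightarrow> cmat A d i j = cmat A d j i"
  shows "pi_scalar (feval l A d M) = 0 \<longleftrightarrow> degenerate_bracket l A d \<sigma> M"
proof (induction M)
  case (Gen i)
  have "{w. fgen i w \<noteq> 0} = {[i]}"
    by (auto simp: fgen_def)
  then show ?case
    by (simp add: pi_scalar_def fgen_def qv_nonzero)
next
  case (Br x y)
  let ?a = "count_list (qexpr_word x)" and ?b = "count_list (qexpr_word y)"
  have "qv powi twist l A d \<sigma> ?a ?b - qv powi (sform l A d (wt x) (wt y) + twist l A d \<sigma> ?b ?a) = 0
      \<longleftrightarrow> twist l A d \<sigma> ?a ?b - twist l A d \<sigma> ?b ?a = sform l A d (wt x) (wt y)"
    by (auto simp: qv_powi_inject)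
  also have "\<dots> \<longleftrightarrow> angle_form l A d \<sigma> (wt x) (wt y) = 0"
    by (auto simp: twist_antisym[OF assms] angle_form_def wt_eq_count_list)
  finally show ?case
    unfolding pi_scalar_feval_Br using Br by auto
qed

end

theorem mainTheorem9:
  fixes l :: nat and A :: "nat \<Rightarrow> nat \<Rightarrow> int" and d :: "nat \<Rightarrow> int"
    and \<sigma> :: "nat \<Rightarrow> nat \<Rightarrow> int" and M :: qexpr
  assumes "untwisted_affine_cartan l A"
    and "symmetrizer l A d"
    and "sign_choice l A \<sigma>"
    and "qexpr_over l M"
  shows "(piB l A d \<sigma> M = (\<lambda>_. 0) \<longleftrightarrow> degenerate_bracket l A d \<sigma> M)
    \<and> (\<not> degenerate_bracket l A d \<sigma> M \<longrightarrow>
         (\<exists>c w. c \<noteq> 0 \<and> set w \<subseteq> {..l} \<and> piB l A d \<sigma> M = (\<lambda>x. c * pmono l A d \<sigma> w x)))"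
proof -
  define S where "S = pi_scalar l A d \<sigma> (feval l A d M)"
  define w where "w = qexpr_word M"
  have S_eq_0_iff: "S = 0 \<longleftrightarrow> degenerate_bracket l A d \<sigma> M"
    unfolding S_def using assms(2)
    by (intro pi_scalar_feval_eq_0_iff) (simp add: symmetrizer_def cmat_def)
  have piB_eq: "piB l A d \<sigma> M = (\<lambda>c. S * pbasis (count_list w) c)"
    unfolding piB_def S_def w_def by (intro pi_free_homogeneous homogeneous_feval)
  then have "piB l A d \<sigma> M = (\<lambda>_. 0) \<longleftrightarrow> S = 0"
    by (metis (mono_tags) mult_cancel_left1 pbasis_def mult_zero_left)
  moreover have "piB l A d \<sigma> M = (\<lambda>x. (S * qv powi - word_twist l A d \<sigma> w) * pmono l A d \<sigma> w x)"
    by (simp add: piB_eq pmono_eq_pbasis qv_powi_neg_cancel mult.assoc)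
  ultimately show ?thesis
    using S_eq_0_iff set_qexpr_word[OF assms(4)] qv_nonzero unfolding w_def
    by (metis mult_eq_0_iff qv_powi_nonzero)
qed

end
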